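(* For all integers $s_1,s_2\ge1$ the bi-brackets $\left[\begin{matrix}s_1,s_2\\ 1,0\end{matrix}\right]$ and $\left[\begin{matrix}s_1,s_2\\ 0,1\end{matrix}\right]$ lie in $\operatorname{Fil}^{W,L}_{s_1+s_2+1,\,3}(\mathcal{MD})$, i.e. each is a $\mathbb{Q}$-linear combination of $1$ and brackets $[t_1,\dots,t_m]$ with $m\le3$ and $t_1+\dots+t_m\le s_1+s_2+1$.
   Context: Bi-brackets: for integers $s_j\ge1$, $r_j\ge0$, \[ \left[\begin{matrix}s_1,\dots,s_l\\ r_1,\dots,r_l\end{matrix}\right]:=\sum_{\substack{u_1>\dots>u_l>0\\ v_1,\dots,v_l>0}}\prod_{j=1}^{l}\frac{u_j^{r_j}}{r_j!}\,\frac{v_j^{s_j-1}}{(s_j-1)!}\;q^{u_1v_1+\dots+u_lv_l}\in\mathbb{Q}[[q]]. \] Brackets: $[t_1,\dots,t_m]:=\left[\begin{matrix}t_1,\dots,t_m\\ 0,\dots,0\end{matrix}\right]$ ($t_j\ge1$), of weight $t_1+\dots+t_m$ and length $m$. $\mathcal{MD}$ is the $\mathbb{Q}$-span of $1$ and all brackets, and $\operatorname{Fil}^{W,L}_{k,l}(\mathcal{MD})$ is the $\mathbb{Q}$-span of $1$ and the brackets of length $m\le \min(k,l)$ and weight $\le k$. *)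

theory Defs
  imports "HOL-Computational_Algebra.Formal_Power_Series"
begin

definition bb_index :: "nat \<Rightarrow> nat \<Rightarrow> (nat list \<times> nat list) set" where
  "bb_index l N = {(us, vs). length us = l \<and> length vs = l \<and> sorted_wrt (>) us \<and>
      (\<forall>u\<in>set us. u > 0) \<and> (\<forall>v\<in>set vs. v > 0) \<and>
      (\<Sum>j<l. us ! j * vs ! j) = N}"

text \<open>Bi-bracket with upper row ss = (s_1,...,s_l) and lower row rs = (r_1,...,r_l),
  as a formal power series in q over the rationals.\<close>
definition bibracket :: "nat list \<Rightarrow> nat list \<Rightarrow> rat fps" where
  "bibracket ss rs = Abs_fps (\<lambda>N. \<Sum>(us, vs)\<in>bb_index (length ss) N.
      \<Prod>j<length ss. (of_nat (us ! j) ^ (rs ! j) / fact (rs ! j)) *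
                      (of_nat (vs ! j) ^ (ss ! j - 1) / fact (ss ! j - 1)))"

definition bracket :: "nat list \<Rightarrow> rat fps" where
  "bracket ts = bibracket ts (replicate (length ts) 0)"

definition Fil_WL :: "nat \<Rightarrow> nat \<Rightarrow> rat fps set" where
  "Fil_WL k l = {f. \<exists>(c0::rat) (T::nat list set) (a::nat list \<Rightarrow> rat).
      finite T \<and>
      (\<forall>ts\<in>T. 1 \<le> length ts \<and> length ts \<le> min k l \<and> (\<forall>t\<in>set ts. 1 \<le> t) \<and> sum_list ts \<le> k) \<and>
      f = fps_const c0 + (\<Sum>ts\<in>T. fps_const (a ts) * bracket ts)}"

end

theory Submission
  imports Defs "HOL-Computational_Algebra.Polynomial"
begin

text \<open>
  Write \<open>bisum\<^sub>l W\<close> for the sum of \<open>W(u, v) q\<^sup>u\<^sup>\<cdot>\<^sup>v\<close> over the index set of a bi-bracket of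
  depth \<open>l\<close>. If \<open>W\<close> is a polynomial of degree \<open>d\<close> in \<open>v\<^sub>1, \<dots>, v\<^sub>l\<close>, the sum is a combination of
  brackets of depth \<open>l\<close> and weight at most \<open>d + l\<close>; conjugation of partitions, which exchanges the
  \<open>v\<close>'s with the gaps between consecutive \<open>u\<close>'s, gives the same for polynomials in the gaps.
  Products of such sums expand by the stuffle rule; the correction terms, where two \<open>u\<close>'s
  coincide, contain convolutions \<open>\<Sum> f(k) g(v - k)\<close> over \<open>0 < k < v\<close>, which are polynomials in
  \<open>v\<close> by Faulhaber's formula. For a weight \<open>W\<close> not depending on the \<open>v\<close>'s, the correction term of
  its product with \<open>bisum\<^sub>1 \<phi>(u)\<close> is the sum of \<open>(v\<^sub>1 - 1) \<phi>(u\<^sub>1) W + (v\<^sub>2 - 1) \<phi>(u\<^sub>2) W\<close>. After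
  conjugation, the bi-brackets with weight \<open>u\<^sub>1 f(v\<^sub>1) g(v\<^sub>2)\<close> or \<open>u\<^sub>2 f(v\<^sub>1) g(v\<^sub>2)\<close> become
  combinations of such correction terms and gap polynomials, all of total degree at most
  \<open>s\<^sub>1 + s\<^sub>2 + 1\<close>.
\<close>

unbundle fps_syntax

section \<open>Polynomial functions on the naturals\<close>

definition poly_fun :: "nat \<Rightarrow> (nat \<Rightarrow> rat) set" where
  "poly_fun d = {f. \<exists>p. degree p \<le> d \<and> (\<forall>n. f n = poly p (of_nat n))}"

lemma poly_funI: "degree p \<le> d \<Longrightarrow> (\<And>n. f n = poly p (of_nat n)) \<Longrightarrow> f \<in> poly_fun d"
  unfolding poly_fun_def by blast

lemma poly_funE:
  assumes "f \<in> poly_fun d"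
  obtains p where "degree p \<le> d" "\<And>n. f n = poly p (of_nat n)"
  using assms unfolding poly_fun_def by blast

lemma poly_fun_mono: "f \<in> poly_fun d \<Longrightarrow> d \<le> d' \<Longrightarrow> f \<in> poly_fun d'"
  by (erule poly_funE) (rule poly_funI, auto)

lemma poly_fun_const: "(\<lambda>_. c) \<in> poly_fun d"
  by (rule poly_funI[of "[:c:]"]) simp_all

lemma poly_fun_monomial: "(\<lambda>n. of_nat n ^ i) \<in> poly_fun i"
  by (rule poly_funI[of "monom 1 i"]) (simp_all add: degree_monom_le poly_monom)

lemma poly_fun_of_nat: "(\<lambda>n. of_nat n) \<in> poly_fun 1"
  using poly_fun_monomial[of 1] by simp

lemma poly_fun_add: "f \<in> poly_fun d \<Longrightarrow> g \<in> poly_fun d \<Longrightarrow> (\<lambda>n. f n + g n) \<in> poly_fun d"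
  by (elim poly_funE, rule poly_funI[OF degree_add_le]) simp_all

lemma poly_fun_diff: "f \<in> poly_fun d \<Longrightarrow> g \<in> poly_fun d \<Longrightarrow> (\<lambda>n. f n - g n) \<in> poly_fun d"
  by (elim poly_funE, rule poly_funI[OF degree_diff_le]) simp_all

lemma poly_fun_cmult: "f \<in> poly_fun d \<Longrightarrow> (\<lambda>n. c * f n) \<in> poly_fun d"
  by (elim poly_funE, rule poly_funI[of "smult c _"]) (auto intro: order.trans[OF degree_smult_le])

lemma poly_fun_mult: "f \<in> poly_fun d1 \<Longrightarrow> g \<in> poly_fun d2 \<Longrightarrow> (\<lambda>n. f n * g n) \<in> poly_fun (d1 + d2)"
  by (elim poly_funE, rule poly_funI[OF order.trans[OF degree_mult_le]]) simp_all

lemma poly_fun_sum: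
  "finite I \<Longrightarrow> (\<And>i. i \<in> I \<Longrightarrow> f i \<in> poly_fun d) \<Longrightarrow> (\<lambda>n. \<Sum>i\<in>I. f i n) \<in> poly_fun d"
  by (induction I rule: finite_induct) (auto intro: poly_fun_add poly_fun_const[of 0, simplified])

lemma poly_fun_sum_powers: "(\<lambda>n. \<Sum>k<n. of_nat k ^ a) \<in> poly_fun (Suc a)"
proof (induction a rule: less_induct)
  case (less a)
  define F where "F j n = (\<Sum>k<n. (of_nat k :: rat) ^ j)" for j n
  have telescope: "(of_nat n :: rat) ^ Suc a = (\<Sum>j\<le>a. of_nat (Suc a choose j) * F j n)" for n
  proof -
    have "(of_nat n :: rat) ^ Suc a = (\<Sum>k<n. (of_nat k + 1) ^ Suc a - of_nat k ^ Suc a)"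
      using sum_lessThan_telescope[of "\<lambda>k. (of_nat k :: rat) ^ Suc a" n] by (simp add: add.commute)
    also have "\<dots> = (\<Sum>k<n. \<Sum>j\<le>a. of_nat (Suc a choose j) * of_nat k ^ j)"
    proof (rule sum.cong[OF refl])
      fix k
      show "(of_nat k + 1 :: rat) ^ Suc a - of_nat k ^ Suc a
          = (\<Sum>j\<le>a. of_nat (Suc a choose j) * of_nat k ^ j)"
        using binomial_ring[of "of_nat k :: rat" 1 "Suc a"] by (simp del: power_Suc add: sum.atMost_Suc)
    qed
    finally show ?thesis
      by (simp add: F_def sum_distrib_left sum.swap[of _ "{..<n}"])
  qed
  have "F a n = (of_nat n ^ Suc a - (\<Sum>j<a. of_nat (Suc a choose j) * F j n)) / of_nat (Suc a)" for n
    using telescope[of n] by (simp add: lessThan_Suc_atMost[symmetric] field_simps)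
  moreover have "(\<lambda>n. (of_nat n ^ Suc a - (\<Sum>j<a. of_nat (Suc a choose j) * F j n)) / of_nat (Suc a))
      \<in> poly_fun (Suc a)"
    using less unfolding F_def divide_rat_def
    by (subst mult.commute, intro poly_fun_cmult poly_fun_diff poly_fun_monomial poly_fun_sum)
       (auto intro!: poly_fun_mono[OF less])
  ultimately show ?case unfolding F_def by simp
qed

lemma poly_fun_expansion:
  assumes "f \<in> poly_fun d"
  obtains c where "\<And>n. f n = (\<Sum>i\<le>d. c i * of_nat n ^ i)"
proof -
  obtain p where p: "degree p \<le> d" "\<And>n. f n = poly p (of_nat n)"
    using assms poly_funE by blast
  have "poly p x = (\<Sum>i\<le>d. coeff p i * x ^ i)" for x :: rat
    unfolding poly_altdef using p(1)
    by (intro sum.mono_neutral_left) (auto simp: coeff_eq_0)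
  with p(2) show thesis by (intro that[of "coeff p"]) simp
qed

lemma poly_fun_convolution_monomial:
  "(\<lambda>n. \<Sum>k<n. of_nat k ^ i * of_nat (n - k) ^ j) \<in> poly_fun (i + j + 1)"
proof -
  have "(\<Sum>k<n. (of_nat k :: rat) ^ i * of_nat (n - k) ^ j)
      = (\<Sum>m\<le>j. (of_nat (j choose m) * (-1) ^ (j - m)) * (of_nat n ^ m * (\<Sum>k<n. of_nat k ^ (i + (j - m)))))"
    for n
  proof -
    have "(of_nat k :: rat) ^ i * of_nat (n - k) ^ j
        = (\<Sum>m\<le>j. of_nat (j choose m) * (-1) ^ (j - m) * of_nat n ^ m * of_nat k ^ (i + (j - m)))"
      if "k < n" for k
      using that binomial_ring[of "of_nat n :: rat" "- of_nat k" j]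
      by (simp del: add_diff_assoc
          add: of_nat_diff power_minus[of "of_nat k"] power_add sum_distrib_left mult_ac)
    then show ?thesis
      by (simp add: sum_distrib_left sum.swap[of _ "{..<n}"] mult_ac)
  qed
  moreover have "(\<lambda>n. \<Sum>m\<le>j. (of_nat (j choose m) * (-1) ^ (j - m)) * (of_nat n ^ m * (\<Sum>k<n. (of_nat k :: rat) ^ (i + (j - m)))))
      \<in> poly_fun (i + j + 1)"
    by (intro poly_fun_sum poly_fun_cmult)
       (auto intro!: poly_fun_mono[OF poly_fun_mult[OF poly_fun_monomial poly_fun_sum_powers]])
  ultimately show ?thesis by simp
qed

lemma poly_fun_convolution:
  assumes "f \<in> poly_fun d1" "g \<in> poly_fun d2"
  shows "(\<lambda>n. \<Sum>k<n. f k * g (n - k)) \<in> poly_fun (d1 + d2 + 1)"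
proof -
  obtain b where b: "\<And>n. f n = (\<Sum>i\<le>d1. b i * of_nat n ^ i)"
    using poly_fun_expansion[OF assms(1)] by blast
  obtain c where c: "\<And>n. g n = (\<Sum>j\<le>d2. c j * of_nat n ^ j)"
    using poly_fun_expansion[OF assms(2)] by blast
  have "(\<Sum>k<n. f k * g (n - k))
      = (\<Sum>i\<le>d1. \<Sum>j\<le>d2. (b i * c j) * (\<Sum>k<n. of_nat k ^ i * of_nat (n - k) ^ j))" for n
  proof -
    have "(\<Sum>k<n. f k * g (n - k))
        = (\<Sum>k<n. \<Sum>i\<le>d1. \<Sum>j\<le>d2. (b i * c j) * (of_nat k ^ i * of_nat (n - k) ^ j))"
      by (simp add: b c sum_product mult_ac)
    also have "\<dots> = (\<Sum>i\<le>d1. \<Sum>k<n. \<Sum>j\<le>d2. (b i * c j) * (of_nat k ^ i * of_nat (n - k) ^ j))"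
      by (rule sum.swap)
    also have "\<dots> = (\<Sum>i\<le>d1. \<Sum>j\<le>d2. \<Sum>k<n. (b i * c j) * (of_nat k ^ i * of_nat (n - k) ^ j))"
      by (intro sum.cong refl sum.swap)
    finally show ?thesis by (simp add: sum_distrib_left)
  qed
  moreover have "(\<lambda>n. \<Sum>i\<le>d1. \<Sum>j\<le>d2. (b i * c j) * (\<Sum>k<n. of_nat k ^ i * of_nat (n - k) ^ j))
      \<in> poly_fun (d1 + d2 + 1)"
    by (intro poly_fun_sum poly_fun_cmult)
       (auto simp del: of_nat_diff intro!: poly_fun_mono[OF poly_fun_convolution_monomial])
  ultimately show ?thesis by simp
qed

text \<open>The sum over \<open>1 \<le> k < n\<close> is polynomial only for \<open>n > 0\<close>: at \<open>n = 0\<close> it vanishes.\<close>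

lemma poly_fun_convolution_pos:
  assumes "f \<in> poly_fun d1" "g \<in> poly_fun d2"
  obtains h where "h \<in> poly_fun (d1 + d2 + 1)" "\<And>n. 0 < n \<Longrightarrow> (\<Sum>k\<in>{1..<n}. f k * g (n - k)) = h n"
proof
  show "(\<lambda>n. (\<Sum>k<n. f k * g (n - k)) - f 0 * g n) \<in> poly_fun (d1 + d2 + 1)"
    using assms by (intro poly_fun_diff poly_fun_convolution poly_fun_cmult) (auto intro: poly_fun_mono)
  fix n :: nat assume "0 < n"
  then have "{..<n} = insert 0 {1..<n}" by auto
  then show "(\<Sum>k\<in>{1..<n}. f k * g (n - k)) = (\<Sum>k<n. f k * g (n - k)) - f 0 * g n" by simp
qed

lemma poly_fun_0_const: "g \<in> poly_fun 0 \<Longrightarrow> g n = g 0"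
  by (elim poly_funE) (auto elim: degree_eq_zeroE)

lemma poly_fun_Suc_decompose:
  assumes "g \<in> poly_fun (Suc d)"
  obtains c h where "h \<in> poly_fun d" "\<And>n. g n = c + of_nat n * h n"
proof -
  obtain p where p: "degree p \<le> Suc d" "\<And>n. g n = poly p (of_nat n)"
    using assms poly_funE by blast
  obtain a q where "p = pCons a q"
    by (cases p)
  with p show thesis
    by (intro that[of "\<lambda>n. poly q (of_nat n)" a] poly_funI[of q]) (auto split: if_splits)
qed

inductive_set mpoly_fun :: "nat \<Rightarrow> nat \<Rightarrow> (nat list \<Rightarrow> rat) set" for m d :: nat where
  monomial: "(\<Sum>j<m. e j) \<le> d \<Longrightarrow> (\<lambda>vs. \<Prod>j<m. of_nat (vs ! j) ^ e j) \<in> mpoly_fun m d"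
| add: "P \<in> mpoly_fun m d \<Longrightarrow> Q \<in> mpoly_fun m d \<Longrightarrow> (\<lambda>vs. P vs + Q vs) \<in> mpoly_fun m d"
| cmult: "P \<in> mpoly_fun m d \<Longrightarrow> (\<lambda>vs. c * P vs) \<in> mpoly_fun m d"

lemma mpoly_fun_mono: "P \<in> mpoly_fun m d \<Longrightarrow> d \<le> d' \<Longrightarrow> P \<in> mpoly_fun m d'"
  by (induction rule: mpoly_fun.induct) (auto intro: mpoly_fun.intros)

lemma mpoly_fun_const: "(\<lambda>_. c) \<in> mpoly_fun m d"
  using mpoly_fun.cmult[OF mpoly_fun.monomial[where e="\<lambda>_. 0"], where c=c] by simp

lemma mpoly_fun_var:
  assumes "j < m" shows "(\<lambda>vs. of_nat (vs ! j)) \<in> mpoly_fun m 1"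
proof -
  have "(\<Prod>i<m. (of_nat (vs ! i) :: rat) ^ (if i = j then 1 else 0))
      = (\<Prod>i<m. if i = j then of_nat (vs ! i) else 1)" for vs
    by (rule prod.cong) auto
  also have "(\<Prod>i<m. if i = j then of_nat (vs ! i) else 1) = (of_nat (vs ! j) :: rat)" for vs
    using assms by (simp add: prod.delta)
  finally have "(\<Prod>i<m. (of_nat (vs ! i) :: rat) ^ (if i = j then 1 else 0)) = of_nat (vs ! j)" for vs .
  then show ?thesis
    using mpoly_fun.monomial[where m=m and d=1 and e="\<lambda>i. if i = j then 1 else 0"] assms by simp
qed

lemma mpoly_fun_sum:
  "finite I \<Longrightarrow> (\<And>i. i \<in> I \<Longrightarrow> P i \<in> mpoly_fun m d) \<Longrightarrow> (\<lambda>vs. \<Sum>i\<in>I. P i vs) \<in> mpoly_fun m d"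
  by (induction I rule: finite_induct) (auto intro: mpoly_fun.add mpoly_fun_const[of 0, simplified])

lemma mpoly_fun_mult_monomial:
  assumes "Q \<in> mpoly_fun m d2" "(\<Sum>j<m. e j) \<le> d1"
  shows "(\<lambda>vs. (\<Prod>j<m. of_nat (vs ! j) ^ e j) * Q vs) \<in> mpoly_fun m (d1 + d2)"
  using assms(1)
proof (induction rule: mpoly_fun.induct)
  case (monomial e')
  have "(\<lambda>vs. \<Prod>j<m. of_nat (vs ! j) ^ (e j + e' j)) \<in> mpoly_fun m (d1 + d2)"
    using monomial assms(2) by (intro mpoly_fun.monomial) (simp add: sum.distrib)
  then show ?case by (simp add: power_add prod.distrib)
next
  case (add P Q)
  then show ?case by (simp add: distrib_left mpoly_fun.add)
next
  case (cmult P c)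
  then show ?case by (simp add: mult.left_commute mpoly_fun.cmult)
qed

lemma mpoly_fun_mult:
  assumes "P \<in> mpoly_fun m d1" "Q \<in> mpoly_fun m d2"
  shows "(\<lambda>vs. P vs * Q vs) \<in> mpoly_fun m (d1 + d2)"
  using assms(1)
proof (induction rule: mpoly_fun.induct)
  case (monomial e)
  then show ?case using mpoly_fun_mult_monomial[OF assms(2)] by simp
next
  case (add P1 P2)
  then show ?case by (simp add: distrib_right mpoly_fun.add)
next
  case (cmult P c)
  then show ?case by (simp add: mult.assoc mpoly_fun.cmult)
qed

lemma mpoly_fun_power: "P \<in> mpoly_fun m d \<Longrightarrow> (\<lambda>vs. P vs ^ i) \<in> mpoly_fun m (i * d)"
  by (induction i) (auto simp: mpoly_fun_const dest: mpoly_fun_mult)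

lemma mpoly_fun_of_nat_add:
  "(\<lambda>vs. of_nat (L vs)) \<in> mpoly_fun m d \<Longrightarrow> (\<lambda>vs. of_nat (M vs)) \<in> mpoly_fun m d
    \<Longrightarrow> (\<lambda>vs. of_nat (L vs + M vs)) \<in> mpoly_fun m d"
  by (simp add: mpoly_fun.add)

lemma poly_fun_comp_mpoly_fun:
  assumes "f \<in> poly_fun d" "(\<lambda>vs. of_nat (L vs)) \<in> mpoly_fun m 1"
  shows "(\<lambda>vs. f (L vs)) \<in> mpoly_fun m d"
proof -
  obtain c where c: "\<And>n. f n = (\<Sum>i\<le>d. c i * of_nat n ^ i)"
    using poly_fun_expansion[OF assms(1)] by blast
  have "(\<lambda>vs. \<Sum>i\<le>d. c i * of_nat (L vs) ^ i) \<in> mpoly_fun m d"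
    by (intro mpoly_fun_sum mpoly_fun.cmult)
       (auto intro: mpoly_fun_mono[OF mpoly_fun_power[OF assms(2)]])
  then show ?thesis by (simp add: c)
qed

lemma poly_fun_at_mpoly_fun: "f \<in> poly_fun d \<Longrightarrow> j < m \<Longrightarrow> (\<lambda>vs. f (vs ! j)) \<in> mpoly_fun m d"
  by (rule poly_fun_comp_mpoly_fun[OF _ mpoly_fun_var])

section \<open>The filtration\<close>

definition Fil_index :: "nat \<Rightarrow> nat \<Rightarrow> nat list set" where
  "Fil_index k l = {ts. 1 \<le> length ts \<and> length ts \<le> min k l \<and> (\<forall>t\<in>set ts. 1 \<le> t) \<and> sum_list ts \<le> k}"

lemma finite_Fil_index: "finite (Fil_index k l)"
proof (rule finite_subset)
  show "Fil_index k l \<subseteq> {ts. set ts \<subseteq> {..k} \<and> length ts \<le> k}"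
    by (auto simp: Fil_index_def dest: member_le_sum_list)
qed (rule finite_lists_length_le, simp)

lemma Fil_WL_iff:
  "f \<in> Fil_WL k l \<longleftrightarrow> (\<exists>c a. f = fps_const c + (\<Sum>ts\<in>Fil_index k l. fps_const (a ts) * bracket ts))"
proof
  assume "f \<in> Fil_WL k l"
  then obtain c T a where T: "finite T" "T \<subseteq> Fil_index k l"
    and f: "f = fps_const c + (\<Sum>ts\<in>T. fps_const (a ts) * bracket ts)"
    unfolding Fil_WL_def Fil_index_def by blast
  have "(\<Sum>ts\<in>T. fps_const (a ts) * bracket ts)
      = (\<Sum>ts\<in>Fil_index k l. fps_const (if ts \<in> T then a ts else 0) * bracket ts)"
    using T by (intro sum.mono_neutral_cong_left) (auto simp: finite_Fil_index)
  with f show "\<exists>c a. f = fps_const c + (\<Sum>ts\<in>Fil_index k l. fps_const (a ts) * bracket ts)"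
    by (intro exI[of _ c] exI[of _ "\<lambda>ts. if ts \<in> T then a ts else 0"]) simp
next
  assume "\<exists>c a. f = fps_const c + (\<Sum>ts\<in>Fil_index k l. fps_const (a ts) * bracket ts)"
  then obtain c a where "f = fps_const c + (\<Sum>ts\<in>Fil_index k l. fps_const (a ts) * bracket ts)"
    by blast
  then show "f \<in> Fil_WL k l"
    unfolding Fil_WL_def
    by (intro CollectI exI[of _ c] exI[of _ "Fil_index k l"] exI[of _ a] conjI finite_Fil_index)
       (auto simp: Fil_index_def)
qed

lemma Fil_WL_add:
  assumes "f \<in> Fil_WL k l" "g \<in> Fil_WL k l" shows "f + g \<in> Fil_WL k l"
proof -
  obtain c a c' a' where
    "f = fps_const c + (\<Sum>ts\<in>Fil_index k l. fps_const (a ts) * bracket ts)"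
    "g = fps_const c' + (\<Sum>ts\<in>Fil_index k l. fps_const (a' ts) * bracket ts)"
    using assms unfolding Fil_WL_iff by blast
  then have "f + g = fps_const (c + c') + (\<Sum>ts\<in>Fil_index k l. fps_const (a ts + a' ts) * bracket ts)"
    by (simp add: sum.distrib distrib_right fps_const_add[symmetric] add_ac del: fps_const_add)
  then show ?thesis unfolding Fil_WL_iff by (intro exI)
qed

lemma Fil_WL_cmult:
  assumes "f \<in> Fil_WL k l" shows "fps_const c * f \<in> Fil_WL k l"
proof -
  obtain c0 a where "f = fps_const c0 + (\<Sum>ts\<in>Fil_index k l. fps_const (a ts) * bracket ts)"
    using assms unfolding Fil_WL_iff by blast
  then have "fps_const c * f = fps_const (c * c0) + (\<Sum>ts\<in>Fil_index k l. fps_const (c * a ts) * bracket ts)"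
    by (simp add: sum_distrib_left distrib_left fps_const_mult[symmetric] mult.assoc del: fps_const_mult)
  then show ?thesis unfolding Fil_WL_iff by (intro exI)
qed

lemma Fil_WL_diff: "f \<in> Fil_WL k l \<Longrightarrow> g \<in> Fil_WL k l \<Longrightarrow> f - g \<in> Fil_WL k l"
  using Fil_WL_add[of f k l "fps_const (-1) * g"] Fil_WL_cmult[of g k l "-1"]
  by (simp add: fps_const_neg[symmetric] del: fps_const_neg)

lemma Fil_WL_bracket:
  assumes "ts \<in> Fil_index k l" shows "bracket ts \<in> Fil_WL k l"
proof -
  have "(\<Sum>ts'\<in>Fil_index k l. fps_const (if ts' = ts then 1 else 0) * bracket ts')
      = (\<Sum>ts'\<in>Fil_index k l. if ts' = ts then bracket ts' else 0)"
    by (rule sum.cong) simp_all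
  also have "\<dots> = bracket ts"
    using assms by (simp add: finite_Fil_index)
  finally show ?thesis
    unfolding Fil_WL_iff by (metis add_0 fps_const_0_eq_0)
qed

section \<open>Bi-bracket sums with general weights\<close>

definition bisum :: "nat \<Rightarrow> (nat list \<Rightarrow> nat list \<Rightarrow> rat) \<Rightarrow> rat fps" where
  "bisum l W = Abs_fps (\<lambda>N. \<Sum>(us, vs)\<in>bb_index l N. W us vs)"

lemma bisum_add: "bisum l (\<lambda>us vs. W us vs + W' us vs) = bisum l W + bisum l W'"
  by (simp add: bisum_def fps_eq_iff sum.distrib split_def)

lemma bisum_cmult: "bisum l (\<lambda>us vs. c * W us vs) = fps_const c * bisum l W"
  by (simp add: bisum_def fps_eq_iff sum_distrib_left split_def)

lemma bisum_monomial:
  "bisum l (\<lambda>us vs. \<Prod>j<l. of_nat (vs ! j) ^ e j)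
    = fps_const (\<Prod>j<l. fact (e j)) * bracket (map (\<lambda>j. Suc (e j)) [0..<l])"
proof -
  have "(\<Prod>j<l. of_nat (vs ! j) ^ e j :: rat) = (\<Prod>j<l. fact (e j)) *
      (\<Prod>j<l. of_nat (us ! j) ^ (replicate l 0 ! j) / fact (replicate l 0 ! j) *
               (of_nat (vs ! j) ^ (map (\<lambda>j. Suc (e j)) [0..<l] ! j - 1) /
                fact (map (\<lambda>j. Suc (e j)) [0..<l] ! j - 1)))" for us vs :: "nat list"
    unfolding prod.distrib[symmetric] by (rule prod.cong) (simp_all add: nth_map_upt)
  then show ?thesis
    by (simp add: bisum_def bracket_def bibracket_def fps_eq_iff sum_distrib_left split_def)
qed

lemma bisum_mpoly_fun_in_Fil:
  assumes "P \<in> mpoly_fun l d" "1 \<le> l" "l \<le> L" "d + l \<le> k"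
  shows "bisum l (\<lambda>us vs. P vs) \<in> Fil_WL k L"
  using assms(1)
proof (induction rule: mpoly_fun.induct)
  case (monomial e)
  have "sum_list (map (\<lambda>j. Suc (e j)) [0..<l]) = l + (\<Sum>j<l. e j)"
    by (simp only: interv_sum_list_conv_sum_set_nat set_upt atLeast0LessThan) (induction l, simp_all)
  with monomial assms(2-4) have "map (\<lambda>j. Suc (e j)) [0..<l] \<in> Fil_index k L"
    by (auto simp: Fil_index_def)
  then show ?case
    unfolding bisum_monomial by (intro Fil_WL_cmult Fil_WL_bracket)
next
  case (add P Q)
  then show ?case by (simp add: bisum_add Fil_WL_add)
next
  case (cmult P c)
  then show ?case by (simp add: bisum_cmult Fil_WL_cmult)
qed

definition index1 :: "nat \<Rightarrow> (nat \<times> nat) set" where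
  "index1 N = {(u, v). 0 < u \<and> 0 < v \<and> u * v = N}"

definition index2 :: "nat \<Rightarrow> (nat \<times> nat \<times> nat \<times> nat) set" where
  "index2 N = {(u1, u2, v1, v2). u2 < u1 \<and> 0 < u2 \<and> 0 < v1 \<and> 0 < v2 \<and> u1 * v1 + u2 * v2 = N}"

definition index3 :: "nat \<Rightarrow> (nat \<times> nat \<times> nat \<times> nat \<times> nat \<times> nat) set" where
  "index3 N = {(u1, u2, u3, v1, v2, v3). u2 < u1 \<and> u3 < u2 \<and> 0 < u3 \<and> 0 < v1 \<and> 0 < v2 \<and> 0 < v3 \<and>
     u1 * v1 + u2 * v2 + u3 * v3 = N}"

definition bisum1 :: "(nat \<Rightarrow> nat \<Rightarrow> rat) \<Rightarrow> rat fps" where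
  "bisum1 W = Abs_fps (\<lambda>N. \<Sum>(u, v)\<in>index1 N. W u v)"

definition bisum2 :: "(nat \<Rightarrow> nat \<Rightarrow> nat \<Rightarrow> nat \<Rightarrow> rat) \<Rightarrow> rat fps" where
  "bisum2 W = Abs_fps (\<lambda>N. \<Sum>(u1, u2, v1, v2)\<in>index2 N. W u1 u2 v1 v2)"

definition bisum3 :: "(nat \<Rightarrow> nat \<Rightarrow> nat \<Rightarrow> nat \<Rightarrow> nat \<Rightarrow> nat \<Rightarrow> rat) \<Rightarrow> rat fps" where
  "bisum3 W = Abs_fps (\<lambda>N. \<Sum>(u1, u2, u3, v1, v2, v3)\<in>index3 N. W u1 u2 u3 v1 v2 v3)"

lemma finite_index1: "finite (index1 N)"
  by (rule finite_subset[of _ "{..N} \<times> {..N}"]) (auto simp: index1_def)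

lemma finite_index2: "finite (index2 N)"
  by (rule finite_subset[of _ "{..N} \<times> {..N} \<times> {..N} \<times> {..N}"])
     (auto simp: index2_def intro: order.trans[OF _ le_add1] order.trans[OF _ le_add2])

lemma bisum_1: "bisum 1 W = bisum1 (\<lambda>u v. W [u] [v])"
  unfolding bisum_def bisum1_def
  by (intro arg_cong[of _ _ Abs_fps] ext sum.reindex_bij_witness[of _ "\<lambda>(u, v). ([u], [v])"
        "\<lambda>(us, vs). (us ! 0, vs ! 0)"])
     (auto simp: bb_index_def index1_def length_Suc_conv)

lemma bisum_2: "bisum 2 W = bisum2 (\<lambda>u1 u2 v1 v2. W [u1, u2] [v1, v2])"
  unfolding bisum_def bisum2_def
  by (intro arg_cong[of _ _ Abs_fps] ext sum.reindex_bij_witness[of _ "\<lambda>(u1, u2, v1, v2). ([u1, u2], [v1, v2])"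
        "\<lambda>(us, vs). (us ! 0, us ! 1, vs ! 0, vs ! 1)"])
     (auto simp: bb_index_def index2_def length_Suc_conv numeral_2_eq_2)

lemma bisum_3: "bisum 3 W = bisum3 (\<lambda>u1 u2 u3 v1 v2 v3. W [u1, u2, u3] [v1, v2, v3])"
  unfolding bisum_def bisum3_def
  by (intro arg_cong[of _ _ Abs_fps] ext sum.reindex_bij_witness[of _
        "\<lambda>(u1, u2, u3, v1, v2, v3). ([u1, u2, u3], [v1, v2, v3])"
        "\<lambda>(us, vs). (us ! 0, us ! 1, us ! 2, vs ! 0, vs ! 1, vs ! 2)"])
     (auto simp: bb_index_def index3_def length_Suc_conv numeral_3_eq_3 add.assoc)

lemma bisum1_nth: "bisum1 W $ N = (\<Sum>(u, v)\<in>index1 N. W u v)"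
  by (simp add: bisum1_def)

lemma bisum2_nth: "bisum2 W $ N = (\<Sum>(u1, u2, v1, v2)\<in>index2 N. W u1 u2 v1 v2)"
  by (simp add: bisum2_def)

lemma bisum3_nth: "bisum3 W $ N = (\<Sum>(u1, u2, u3, v1, v2, v3)\<in>index3 N. W u1 u2 u3 v1 v2 v3)"
  by (simp add: bisum3_def)

lemma bisum2_add: "bisum2 (\<lambda>u1 u2 v1 v2. W u1 u2 v1 v2 + W' u1 u2 v1 v2) = bisum2 W + bisum2 W'"
  by (simp add: bisum2_def fps_eq_iff sum.distrib split_def)

lemma bisum1_diff: "bisum1 (\<lambda>u v. W u v - W' u v) = bisum1 W - bisum1 W'"
  by (simp add: bisum1_def fps_eq_iff sum_subtractf split_def)

lemma bisum2_diff: "bisum2 (\<lambda>u1 u2 v1 v2. W u1 u2 v1 v2 - W' u1 u2 v1 v2) = bisum2 W - bisum2 W'"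
  by (simp add: bisum2_def fps_eq_iff sum_subtractf split_def)

lemma bisum2_cmult: "bisum2 (\<lambda>u1 u2 v1 v2. c * W u1 u2 v1 v2) = fps_const c * bisum2 W"
  by (simp add: bisum2_def fps_eq_iff sum_distrib_left split_def)

lemma bisum1_cong: "(\<And>u v. 0 < u \<Longrightarrow> 0 < v \<Longrightarrow> W u v = W' u v) \<Longrightarrow> bisum1 W = bisum1 W'"
  by (auto simp: bisum1_def fps_eq_iff index1_def intro!: sum.cong)

lemma bisum2_cong:
  "(\<And>u1 u2 v1 v2. u2 < u1 \<Longrightarrow> 0 < u2 \<Longrightarrow> 0 < v1 \<Longrightarrow> 0 < v2 \<Longrightarrow> W u1 u2 v1 v2 = W' u1 u2 v1 v2)
    \<Longrightarrow> bisum2 W = bisum2 W'"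
  by (auto simp: bisum2_def fps_eq_iff index2_def intro!: sum.cong)

lemma bisum3_cong:
  "(\<And>u1 u2 u3 v1 v2 v3. u2 < u1 \<Longrightarrow> u3 < u2 \<Longrightarrow> 0 < u3 \<Longrightarrow> 0 < v1 \<Longrightarrow> 0 < v2 \<Longrightarrow> 0 < v3 \<Longrightarrow>
      W u1 u2 u3 v1 v2 v3 = W' u1 u2 u3 v1 v2 v3) \<Longrightarrow> bisum3 W = bisum3 W'"
  by (auto simp: bisum3_def fps_eq_iff index3_def intro!: sum.cong)

text \<open>Conjugation of partitions: the \<open>v\<close>'s and the gaps between consecutive \<open>u\<close>'s trade
  places.\<close>

lemma bisum1_conjugate: "bisum1 W = bisum1 (\<lambda>u v. W v u)"
  unfolding bisum1_def
  by (intro arg_cong[of _ _ Abs_fps] ext sum.reindex_bij_witness[of _ prod.swap prod.swap])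
     (auto simp: index1_def)

lemma bisum2_conjugate: "bisum2 W = bisum2 (\<lambda>u1 u2 v1 v2. W (v1 + v2) v1 u2 (u1 - u2))"
proof -
  have weight: "(v1 + v2) * u2 + v1 * (u1 - u2) = u1 * v1 + u2 * v2" if "u2 < u1" for u1 u2 v1 v2 :: nat
  proof -
    obtain d where "u1 = u2 + d" using \<open>u2 < u1\<close> less_imp_add_positive by blast
    then show ?thesis by (simp add: algebra_simps)
  qed
  define \<sigma> :: "nat \<times> nat \<times> nat \<times> nat \<Rightarrow> _"
    where "\<sigma> = (\<lambda>(u1, u2, v1, v2). (v1 + v2, v1, u2, u1 - u2))"
  show ?thesis
    unfolding bisum2_def
    by (intro arg_cong[of _ _ Abs_fps] ext sum.reindex_bij_witness[of _ \<sigma> \<sigma>])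
       (use weight in \<open>auto simp: index2_def \<sigma>_def\<close>)
qed

lemma bisum3_conjugate:
  "bisum3 W = bisum3 (\<lambda>u1 u2 u3 v1 v2 v3. W (v1 + v2 + v3) (v1 + v2) v1 u3 (u2 - u3) (u1 - u2))"
proof -
  have weight: "(v1 + v2 + v3) * u3 + (v1 + v2) * (u2 - u3) + v1 * (u1 - u2) = u1 * v1 + u2 * v2 + u3 * v3"
    if "u2 < u1" "u3 < u2" for u1 u2 u3 v1 v2 v3 :: nat
  proof -
    obtain d where d: "u1 = u2 + d" using \<open>u2 < u1\<close> less_imp_add_positive by blast
    obtain e where e: "u2 = u3 + e" using \<open>u3 < u2\<close> less_imp_add_positive by blast
    show ?thesis unfolding d e by (simp add: algebra_simps)
  qed
  define \<sigma> :: "nat \<times> nat \<times> nat \<times> nat \<times> nat \<times> nat \<Rightarrow> _"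
    where "\<sigma> = (\<lambda>(u1, u2, u3, v1, v2, v3). (v1 + v2 + v3, v1 + v2, v1, u3, u2 - u3, u1 - u2))"
  show ?thesis
    unfolding bisum3_def
    by (intro arg_cong[of _ _ Abs_fps] ext sum.reindex_bij_witness[of _ \<sigma> \<sigma>])
       (use weight in \<open>auto simp: index3_def \<sigma>_def\<close>)
qed

lemma bisum2_conjugate_gaps:
  assumes "\<And>u1 u2 v1 v2. u2 < u1 \<Longrightarrow> 0 < u2 \<Longrightarrow> 0 < v1 \<Longrightarrow> 0 < v2 \<Longrightarrow> W u1 u2 v1 v2 = F u2 (u1 - u2)"
  shows "bisum2 W = bisum2 (\<lambda>u1 u2 v1 v2. F v1 v2)"
  by (subst bisum2_conjugate, rule bisum2_cong) (simp add: assms)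

lemma bisum3_conjugate_gaps:
  assumes "\<And>u1 u2 u3 v1 v2 v3. u2 < u1 \<Longrightarrow> u3 < u2 \<Longrightarrow> 0 < u3 \<Longrightarrow> 0 < v1 \<Longrightarrow> 0 < v2 \<Longrightarrow> 0 < v3 \<Longrightarrow>
      W u1 u2 u3 v1 v2 v3 = F u3 (u2 - u3) (u1 - u2)"
  shows "bisum3 W = bisum3 (\<lambda>u1 u2 u3 v1 v2 v3. F v1 v2 v3)"
  by (subst bisum3_conjugate, rule bisum3_cong) (simp add: assms)

lemma bisum1_in_Fil:
  assumes "P \<in> mpoly_fun 1 d" "d + 1 \<le> k" "1 \<le> l"
    and "\<And>u v. 0 < u \<Longrightarrow> 0 < v \<Longrightarrow> W u v = P [v]"
  shows "bisum1 W \<in> Fil_WL k l"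
proof -
  have "bisum1 W = bisum 1 (\<lambda>us vs. P vs)"
    unfolding bisum_1 by (rule bisum1_cong) (simp add: assms(4))
  then show ?thesis using bisum_mpoly_fun_in_Fil[OF assms(1) _ assms(3,2)] by simp
qed

lemma bisum2_in_Fil:
  assumes "P \<in> mpoly_fun 2 d" "d + 2 \<le> k" "2 \<le> l"
    and "\<And>u1 u2 v1 v2. u2 < u1 \<Longrightarrow> 0 < u2 \<Longrightarrow> 0 < v1 \<Longrightarrow> 0 < v2 \<Longrightarrow> W u1 u2 v1 v2 = P [v1, v2]"
  shows "bisum2 W \<in> Fil_WL k l"
proof -
  have "bisum2 W = bisum 2 (\<lambda>us vs. P vs)"
    unfolding bisum_2 by (rule bisum2_cong) (simp add: assms(4))
  then show ?thesis using bisum_mpoly_fun_in_Fil[OF assms(1) _ assms(3,2)] by simp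
qed

lemma bisum3_in_Fil:
  assumes "P \<in> mpoly_fun 3 d" "d + 3 \<le> k" "3 \<le> l"
    and "\<And>u1 u2 u3 v1 v2 v3. u2 < u1 \<Longrightarrow> u3 < u2 \<Longrightarrow> 0 < u3 \<Longrightarrow> 0 < v1 \<Longrightarrow> 0 < v2 \<Longrightarrow> 0 < v3 \<Longrightarrow>
      W u1 u2 u3 v1 v2 v3 = P [v1, v2, v3]"
  shows "bisum3 W \<in> Fil_WL k l"
proof -
  have "bisum3 W = bisum 3 (\<lambda>us vs. P vs)"
    unfolding bisum_3 by (rule bisum3_cong) (simp add: assms(4))
  then show ?thesis using bisum_mpoly_fun_in_Fil[OF assms(1) _ assms(3,2)] by simp
qed

lemma bisum1_in_Fil_gaps:
  assumes "P \<in> mpoly_fun 1 d" "d + 1 \<le> k" "1 \<le> l"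
    and "\<And>u v. 0 < u \<Longrightarrow> 0 < v \<Longrightarrow> W u v = P [u]"
  shows "bisum1 W \<in> Fil_WL k l"
  by (subst bisum1_conjugate, rule bisum1_in_Fil[OF assms(1-3)]) (simp add: assms(4))

lemma bisum2_in_Fil_gaps:
  assumes "P \<in> mpoly_fun 2 d" "d + 2 \<le> k" "2 \<le> l"
    and "\<And>u1 u2 v1 v2. u2 < u1 \<Longrightarrow> 0 < u2 \<Longrightarrow> W u1 u2 v1 v2 = P [u2, u1 - u2]"
  shows "bisum2 W \<in> Fil_WL k l"
  by (subst bisum2_conjugate_gaps[of W "\<lambda>g1 g2. P [g1, g2]"], simp add: assms(4))
     (rule bisum2_in_Fil[OF assms(1-3)], simp)

lemma bisum3_in_Fil_gaps:
  assumes "P \<in> mpoly_fun 3 d" "d + 3 \<le> k" "3 \<le> l"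
    and "\<And>u1 u2 u3 v1 v2 v3. u2 < u1 \<Longrightarrow> u3 < u2 \<Longrightarrow> 0 < u3 \<Longrightarrow>
      W u1 u2 u3 v1 v2 v3 = P [u3, u2 - u3, u1 - u2]"
  shows "bisum3 W \<in> Fil_WL k l"
  by (subst bisum3_conjugate_gaps[of W "\<lambda>g1 g2 g3. P [g1, g2, g3]"], simp add: assms(4))
     (rule bisum3_in_Fil[OF assms(1-3)], simp)

section \<open>Stuffle products\<close>

lemma sum_mult_sum_fibres:
  fixes N :: nat and wx :: "'a \<Rightarrow> nat" and wy :: "'b \<Rightarrow> nat"
  assumes "\<And>i. finite {x. P x \<and> wx x = i}" "\<And>i. finite {y. Q y \<and> wy y = i}"
  shows "(\<Sum>i=0..N. (\<Sum>x | P x \<and> wx x = i. f x) * (\<Sum>y | Q y \<and> wy y = N - i. g y))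
       = (\<Sum>(x, y) | P x \<and> Q y \<and> wx x + wy y = N. f x * g y :: 'c::comm_semiring_1)"
proof -
  define X where "X i = {x. P x \<and> wx x = i}" for i
  define Y where "Y i = {y. Q y \<and> wy y = i}" for i
  have "(\<Sum>i=0..N. sum f (X i) * sum g (Y (N - i))) = (\<Sum>i=0..N. \<Sum>(x, y)\<in>X i \<times> Y (N - i). f x * g y)"
    by (simp add: sum_product sum.cartesian_product)
  also have "\<dots> = (\<Sum>(x, y)\<in>(\<Union>i\<in>{0..N}. X i \<times> Y (N - i)). f x * g y)"
    by (rule sum.UNION_disjoint[symmetric]) (auto simp: X_def Y_def assms)
  also have "(\<Union>i\<in>{0..N}. X i \<times> Y (N - i)) = {(x, y). P x \<and> Q y \<and> wx x + wy y = N}"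
    by (auto simp: X_def Y_def)
  finally show ?thesis unfolding X_def Y_def .
qed

lemma sum_split_trichotomy:
  fixes f g :: "'a \<Rightarrow> 'b::linorder"
  assumes "finite C"
  shows "sum F C = sum F {z\<in>C. f z < g z} + sum F {z\<in>C. g z < f z} + sum F {z\<in>C. f z = g z}"
proof -
  have "sum F C = sum F ({z\<in>C. f z < g z} \<union> {z\<in>C. g z < f z} \<union> {z\<in>C. f z = g z})"
    by (rule arg_cong[of _ _ "sum F"]) auto
  also have "\<dots> = sum F {z\<in>C. f z < g z} + sum F {z\<in>C. g z < f z} + sum F {z\<in>C. f z = g z}"
    using assms by (subst sum.union_disjoint, auto)+
  finally show ?thesis .
qed

lemma index1_fibre: "index1 N = {x. (case x of (u, v) \<Rightarrow> 0 < u \<and> 0 < v) \<and> (case x of (u, v) \<Rightarrow> u * v) = N}"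
  by (auto simp: index1_def)

lemma index2_fibre:
  "index2 N = {x. (case x of (u1, u2, v1, v2) \<Rightarrow> u2 < u1 \<and> 0 < u2 \<and> 0 < v1 \<and> 0 < v2) \<and>
                  (case x of (u1, u2, v1, v2) \<Rightarrow> u1 * v1 + u2 * v2) = N}"
  by (auto simp: index2_def)

lemma mult_diff_add_nat: "k \<le> w \<Longrightarrow> u * k + u * (w - k) = u * (w :: nat)"
  by (simp add: distrib_left[symmetric])

lemma bisum1_mult_bisum1_nth:
  "(bisum1 A * bisum1 B) $ N = (\<Sum>((u, v), (u', v'))\<in>{((u, v), (u', v')).
      0 < u \<and> 0 < v \<and> 0 < u' \<and> 0 < v' \<and> u * v + u' * v' = N}. A u v * B u' v')"
  unfolding fps_mult_nth bisum1_nth index1_fibre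
  by (subst sum_mult_sum_fibres[OF finite_index1[unfolded index1_fibre] finite_index1[unfolded index1_fibre]])
     (auto intro!: sum.cong)

lemma bisum1_mult_bisum2_nth:
  "(bisum1 A * bisum2 B) $ N = (\<Sum>((u, v), (u1, u2, v1, v2))\<in>{((u, v), (u1, u2, v1, v2)).
      0 < u \<and> 0 < v \<and> u2 < u1 \<and> 0 < u2 \<and> 0 < v1 \<and> 0 < v2 \<and> u * v + (u1 * v1 + u2 * v2) = N}.
      A u v * B u1 u2 v1 v2)"
  unfolding fps_mult_nth bisum1_nth bisum2_nth index1_fibre index2_fibre
  by (subst sum_mult_sum_fibres[OF finite_index1[unfolded index1_fibre] finite_index2[unfolded index2_fibre]])
     (auto intro!: sum.cong)

text \<open>The stuffle product: a pair of index tuples merges into one tuple of larger depth, except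
  where two \<open>u\<close>'s coincide, where the two \<open>v\<close>'s add up.\<close>

lemma bisum1_mult_bisum1:
  "bisum1 A * bisum1 B
     = bisum2 (\<lambda>u1 u2 v1 v2. A u1 v1 * B u2 v2) + bisum2 (\<lambda>u1 u2 v1 v2. A u2 v2 * B u1 v1)
     + bisum1 (\<lambda>u v. \<Sum>k\<in>{1..<v}. A u k * B u (v - k))"
proof (rule fps_ext)
  fix N
  define C :: "((nat \<times> nat) \<times> (nat \<times> nat)) set"
    where "C = {((u, v), (u', v')). 0 < u \<and> 0 < v \<and> 0 < u' \<and> 0 < v' \<and> u * v + u' * v' = N}"
  define F where "F = (\<lambda>((u, v), (u', v')). A u v * B u' v')"
  have "C \<subseteq> (\<Union>i\<le>N. index1 i \<times> index1 (N - i))"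
    by (auto simp: C_def index1_def)
  then have "finite C"
    by (rule finite_subset) (simp add: finite_index1)
  have "(bisum1 A * bisum1 B) $ N = sum F C"
    unfolding C_def F_def by (rule bisum1_mult_bisum1_nth)
  also have "\<dots> = sum F {z\<in>C. fst (snd z) < fst (fst z)} + sum F {z\<in>C. fst (fst z) < fst (snd z)}
      + sum F {z\<in>C. fst (snd z) = fst (fst z)}"
    using \<open>finite C\<close> by (rule sum_split_trichotomy)
  also have "sum F {z\<in>C. fst (snd z) < fst (fst z)} = bisum2 (\<lambda>u1 u2 v1 v2. A u1 v1 * B u2 v2) $ N"
    unfolding bisum2_nth
    by (rule sum.reindex_bij_witness[of _ "\<lambda>(u1, u2, v1, v2). ((u1, v1), (u2, v2))"
          "\<lambda>((u, v), (u', v')). (u, u', v, v')"]) (auto simp: C_def index2_def F_def)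
  also have "sum F {z\<in>C. fst (fst z) < fst (snd z)} = bisum2 (\<lambda>u1 u2 v1 v2. A u2 v2 * B u1 v1) $ N"
    unfolding bisum2_nth
    by (rule sum.reindex_bij_witness[of _ "\<lambda>(u1, u2, v1, v2). ((u2, v2), (u1, v1))"
          "\<lambda>((u, v), (u', v')). (u', u, v', v)"]) (auto simp: C_def index2_def F_def)
  also have "sum F {z\<in>C. fst (snd z) = fst (fst z)}
      = (\<Sum>((u, w), k)\<in>Sigma (index1 N) (\<lambda>(u, w). {1..<w}). A u k * B u (w - k))"
    by (rule sum.reindex_bij_witness[of _ "\<lambda>((u, w), k). ((u, k), (u, w - k))"
          "\<lambda>((u, v), (u', v')). ((u, v + v'), v)"])
       (auto simp: C_def index1_def F_def distrib_left mult_diff_add_nat)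
  also have "\<dots> = bisum1 (\<lambda>u v. \<Sum>k\<in>{1..<v}. A u k * B u (v - k)) $ N"
    unfolding bisum1_nth by (subst sum.Sigma[symmetric]) (auto simp: finite_index1 split_def)
  finally show "(bisum1 A * bisum1 B) $ N = (bisum2 (\<lambda>u1 u2 v1 v2. A u1 v1 * B u2 v2)
      + bisum2 (\<lambda>u1 u2 v1 v2. A u2 v2 * B u1 v1) + bisum1 (\<lambda>u v. \<Sum>k\<in>{1..<v}. A u k * B u (v - k))) $ N"
    by simp
qed

text \<open>Here the new \<open>u\<close> is compared first with \<open>u\<^sub>1\<close> and then, if smaller, with \<open>u\<^sub>2\<close>.\<close>

lemma bisum1_mult_bisum2:
  "bisum1 A * bisum2 B
     = bisum3 (\<lambda>u1 u2 u3 v1 v2 v3. A u1 v1 * B u2 u3 v2 v3)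
     + bisum3 (\<lambda>u1 u2 u3 v1 v2 v3. A u2 v2 * B u1 u3 v1 v3)
     + bisum3 (\<lambda>u1 u2 u3 v1 v2 v3. A u3 v3 * B u1 u2 v1 v2)
     + bisum2 (\<lambda>u1 u2 v1 v2. \<Sum>k\<in>{1..<v1}. A u1 k * B u1 u2 (v1 - k) v2)
     + bisum2 (\<lambda>u1 u2 v1 v2. \<Sum>k\<in>{1..<v2}. A u2 k * B u1 u2 v1 (v2 - k))"
    (is "_ = ?S3a + ?S3b + ?S3c + ?S2a + ?S2b")
proof (rule fps_ext)
  fix N
  define C :: "((nat \<times> nat) \<times> (nat \<times> nat \<times> nat \<times> nat)) set"
    where "C = {((u, v), (u1, u2, v1, v2)). 0 < u \<and> 0 < v \<and> u2 < u1 \<and> 0 < u2 \<and> 0 < v1 \<and> 0 < v2 \<and>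
                 u * v + (u1 * v1 + u2 * v2) = N}"
  define C' where "C' = {z\<in>C. fst (fst z) < fst (snd z)}"
  define F where "F = (\<lambda>((u, v), (u1, u2, v1, v2)). A u v * B u1 u2 v1 v2)"
  have "C \<subseteq> (\<Union>i\<le>N. index1 i \<times> index2 (N - i))"
    by (auto simp: C_def index1_def index2_def)
  then have "finite C"
    by (rule finite_subset) (simp add: finite_index1 finite_index2)
  have "(bisum1 A * bisum2 B) $ N = sum F C"
    unfolding C_def F_def by (rule bisum1_mult_bisum2_nth)
  also have "\<dots> = sum F {z\<in>C. fst (snd z) < fst (fst z)} + sum F C' + sum F {z\<in>C. fst (snd z) = fst (fst z)}"
    unfolding C'_def using \<open>finite C\<close> by (rule sum_split_trichotomy)
  also have "sum F C' = sum F {z\<in>C'. fst (snd (snd z)) < fst (fst z)}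
      + sum F {z\<in>C'. fst (fst z) < fst (snd (snd z))} + sum F {z\<in>C'. fst (snd (snd z)) = fst (fst z)}"
    using \<open>finite C\<close> unfolding C'_def by (intro sum_split_trichotomy) simp
  also have "sum F {z\<in>C. fst (snd z) < fst (fst z)} = ?S3a $ N"
    unfolding bisum3_nth
    by (rule sum.reindex_bij_witness[of _ "\<lambda>(u1, u2, u3, v1, v2, v3). ((u1, v1), (u2, u3, v2, v3))"
          "\<lambda>((u, v), (u1, u2, v1, v2)). (u, u1, u2, v, v1, v2)"]) (auto simp: C_def index3_def F_def)
  also have "sum F {z\<in>C'. fst (snd (snd z)) < fst (fst z)} = ?S3b $ N"
    unfolding bisum3_nth
    by (rule sum.reindex_bij_witness[of _ "\<lambda>(u1, u2, u3, v1, v2, v3). ((u2, v2), (u1, u3, v1, v3))"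
          "\<lambda>((u, v), (u1, u2, v1, v2)). (u1, u, u2, v1, v, v2)"]) (auto simp: C_def C'_def index3_def F_def)
  also have "sum F {z\<in>C'. fst (fst z) < fst (snd (snd z))} = ?S3c $ N"
    unfolding bisum3_nth
    by (rule sum.reindex_bij_witness[of _ "\<lambda>(u1, u2, u3, v1, v2, v3). ((u3, v3), (u1, u2, v1, v2))"
          "\<lambda>((u, v), (u1, u2, v1, v2)). (u1, u2, u, v1, v2, v)"]) (auto simp: C_def C'_def index3_def F_def)
  also have "sum F {z\<in>C. fst (snd z) = fst (fst z)}
      = (\<Sum>((u1, u2, w1, w2), k)\<in>Sigma (index2 N) (\<lambda>(u1, u2, w1, w2). {1..<w1}). A u1 k * B u1 u2 (w1 - k) w2)"
    by (rule sum.reindex_bij_witness[of _ "\<lambda>((u1, u2, w1, w2), k). ((u1, k), (u1, u2, w1 - k, w2))"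
          "\<lambda>((u, v), (u1, u2, v1, v2)). ((u1, u2, v + v1, v2), v)"])
       (auto simp: C_def index2_def F_def distrib_left mult_diff_add_nat)
  also have "\<dots> = ?S2a $ N"
    unfolding bisum2_nth by (subst sum.Sigma[symmetric]) (auto simp: finite_index2 split_def)
  also have "sum F {z\<in>C'. fst (snd (snd z)) = fst (fst z)}
      = (\<Sum>((u1, u2, w1, w2), k)\<in>Sigma (index2 N) (\<lambda>(u1, u2, w1, w2). {1..<w2}). A u2 k * B u1 u2 w1 (w2 - k))"
    by (rule sum.reindex_bij_witness[of _ "\<lambda>((u1, u2, w1, w2), k). ((u2, k), (u1, u2, w1, w2 - k))"
          "\<lambda>((u, v), (u1, u2, v1, v2)). ((u1, u2, v1, v + v2), v)"])
       (auto simp: C_def C'_def index2_def F_def distrib_left mult_diff_add_nat)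
  also have "\<dots> = ?S2b $ N"
    unfolding bisum2_nth by (subst sum.Sigma[symmetric]) (auto simp: finite_index2 split_def)
  finally show "(bisum1 A * bisum2 B) $ N = (?S3a + ?S3b + ?S3c + ?S2a + ?S2b) $ N"
    by (simp add: ac_simps)
qed

lemma bisum1_mult_bisum1_in_Fil:
  assumes f: "f \<in> poly_fun d1" and g: "g \<in> poly_fun d2" and "d1 + d2 + 2 \<le> k" "2 \<le> l"
  shows "bisum1 (\<lambda>u v. f v) * bisum1 (\<lambda>u v. g v) \<in> Fil_WL k l"
proof -
  obtain h where h: "h \<in> poly_fun (d1 + d2 + 1)" "\<And>n. 0 < n \<Longrightarrow> (\<Sum>k\<in>{1..<n}. f k * g (n - k)) = h n"
    using poly_fun_convolution_pos[OF f g] by blast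
  have "bisum2 (\<lambda>u1 u2 v1 v2. f v1 * g v2) \<in> Fil_WL k l"
    by (rule bisum2_in_Fil[where d="d1 + d2" and P="\<lambda>vs. f (vs ! 0) * g (vs ! 1)"])
       (use assms in \<open>auto intro!: mpoly_fun_mult poly_fun_at_mpoly_fun\<close>)
  moreover have "bisum2 (\<lambda>u1 u2 v1 v2. f v2 * g v1) \<in> Fil_WL k l"
    by (rule bisum2_in_Fil[where d="d1 + d2" and P="\<lambda>vs. f (vs ! 1) * g (vs ! 0)"])
       (use assms in \<open>auto intro!: mpoly_fun_mult poly_fun_at_mpoly_fun\<close>)
  moreover have "bisum1 (\<lambda>u v. \<Sum>k\<in>{1..<v}. f k * g (v - k)) \<in> Fil_WL k l"
    by (rule bisum1_in_Fil[where P="\<lambda>vs. h (vs ! 0)"])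
       (use assms h in \<open>auto intro!: poly_fun_at_mpoly_fun\<close>)
  ultimately show ?thesis
    unfolding bisum1_mult_bisum1 by (intro Fil_WL_add)
qed

lemma bisum1_mult_bisum2_in_Fil:
  assumes f: "f \<in> poly_fun d0" and g: "g \<in> poly_fun d1" and h: "h \<in> poly_fun d2"
    and k: "d0 + d1 + d2 + 3 \<le> k" and "3 \<le> l"
  shows "bisum1 (\<lambda>u v. f v) * bisum2 (\<lambda>u1 u2 v1 v2. g v1 * h v2) \<in> Fil_WL k l"
proof -
  obtain c1 where c1: "c1 \<in> poly_fun (d0 + d1 + 1)" "\<And>n. 0 < n \<Longrightarrow> (\<Sum>k\<in>{1..<n}. f k * g (n - k)) = c1 n"
    using poly_fun_convolution_pos[OF f g] by blast
  obtain c2 where c2: "c2 \<in> poly_fun (d0 + d2 + 1)" "\<And>n. 0 < n \<Longrightarrow> (\<Sum>k\<in>{1..<n}. f k * h (n - k)) = c2 n"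
    using poly_fun_convolution_pos[OF f h] by blast
  have "bisum3 (\<lambda>u1 u2 u3 v1 v2 v3. f v1 * (g v2 * h v3)) \<in> Fil_WL k l"
    by (rule bisum3_in_Fil[where d="d0 + (d1 + d2)" and P="\<lambda>vs. f (vs ! 0) * (g (vs ! 1) * h (vs ! 2))"])
       (use assms in \<open>auto intro!: mpoly_fun_mult poly_fun_at_mpoly_fun\<close>)
  moreover have "bisum3 (\<lambda>u1 u2 u3 v1 v2 v3. f v2 * (g v1 * h v3)) \<in> Fil_WL k l"
    by (rule bisum3_in_Fil[where d="d0 + (d1 + d2)" and P="\<lambda>vs. f (vs ! 1) * (g (vs ! 0) * h (vs ! 2))"])
       (use assms in \<open>auto intro!: mpoly_fun_mult poly_fun_at_mpoly_fun\<close>)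
  moreover have "bisum3 (\<lambda>u1 u2 u3 v1 v2 v3. f v3 * (g v1 * h v2)) \<in> Fil_WL k l"
    by (rule bisum3_in_Fil[where d="d0 + (d1 + d2)" and P="\<lambda>vs. f (vs ! 2) * (g (vs ! 0) * h (vs ! 1))"])
       (use assms in \<open>auto intro!: mpoly_fun_mult poly_fun_at_mpoly_fun\<close>)
  moreover have "bisum2 (\<lambda>u1 u2 v1 v2. \<Sum>k\<in>{1..<v1}. f k * (g (v1 - k) * h v2)) \<in> Fil_WL k l"
    by (rule bisum2_in_Fil[where d="d0 + d1 + 1 + d2" and P="\<lambda>vs. c1 (vs ! 0) * h (vs ! 1)"],
        intro mpoly_fun_mult poly_fun_at_mpoly_fun c1(1) h)
       (use assms(4,5) in \<open>auto simp: c1(2)[symmetric] sum_distrib_right mult.assoc\<close>)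
  moreover have "bisum2 (\<lambda>u1 u2 v1 v2. \<Sum>k\<in>{1..<v2}. f k * (g v1 * h (v2 - k))) \<in> Fil_WL k l"
    by (rule bisum2_in_Fil[where d="d1 + (d0 + d2 + 1)" and P="\<lambda>vs. g (vs ! 0) * c2 (vs ! 1)"],
        intro mpoly_fun_mult poly_fun_at_mpoly_fun c2(1) g)
       (use assms(4,5) in \<open>auto simp: c2(2)[symmetric] sum_distrib_left mult.left_commute\<close>)
  ultimately show ?thesis
    unfolding bisum1_mult_bisum2 by (intro Fil_WL_add)
qed

lemma bisum1_u_mult_in_Fil:
  assumes f: "f \<in> poly_fun d" and "d + 2 \<le> k" "2 \<le> l"
  shows "bisum1 (\<lambda>u v. of_nat u * f v) \<in> Fil_WL k l"
proof -
  define T where "T = bisum1 (\<lambda>u v. of_nat u * f v)"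
  have T: "T = bisum1 (\<lambda>u v. of_nat v * f u)"
    unfolding T_def by (rule bisum1_conjugate)
  have remainder: "bisum1 (\<lambda>u v. \<Sum>k\<in>{1..<v}. 1 * f u) = T - bisum1 (\<lambda>u v. f u)"
    unfolding T bisum1_diff[symmetric] by (rule bisum1_cong) (simp add: of_nat_diff algebra_simps)
  have "T = bisum1 (\<lambda>u v. 1) * bisum1 (\<lambda>u v. f u)
      - bisum2 (\<lambda>u1 u2 v1 v2. 1 * f u2) - bisum2 (\<lambda>u1 u2 v1 v2. 1 * f u1) + bisum1 (\<lambda>u v. f u)"
    unfolding bisum1_mult_bisum1 remainder by simp
  moreover have "bisum1 (\<lambda>u v. 1) * bisum1 (\<lambda>u v. f u) \<in> Fil_WL k l"
    using bisum1_mult_bisum1_in_Fil[OF poly_fun_const[of 1 0] f, of k l] assms(2,3)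
    by (subst (2) bisum1_conjugate) simp
  moreover have "bisum2 (\<lambda>u1 u2 v1 v2. 1 * f u2) \<in> Fil_WL k l"
    by (rule bisum2_in_Fil_gaps[where d=d and P="\<lambda>gs. f (gs ! 0)"]) (use assms in \<open>auto intro!: poly_fun_at_mpoly_fun\<close>)
  moreover have "bisum2 (\<lambda>u1 u2 v1 v2. 1 * f u1) \<in> Fil_WL k l"
    by (rule bisum2_in_Fil_gaps[where d=d and P="\<lambda>gs. f (gs ! 0 + gs ! 1)"])
       (use assms in \<open>auto intro!: poly_fun_comp_mpoly_fun mpoly_fun_of_nat_add mpoly_fun_var\<close>)
  moreover have "bisum1 (\<lambda>u v. f u) \<in> Fil_WL k l"
    by (rule bisum1_in_Fil_gaps[where d=d and P="\<lambda>vs. f (vs ! 0)"]) (use assms in \<open>auto intro!: poly_fun_at_mpoly_fun\<close>)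
  ultimately show ?thesis
    unfolding T_def by (metis Fil_WL_add Fil_WL_diff)
qed

lemma bisum2_stuffle_correction_in_Fil:
  assumes \<phi>: "\<phi> \<in> poly_fun e" and f: "f \<in> poly_fun d1" and g: "g \<in> poly_fun d2"
    and k: "e + (d1 + d2) + 3 \<le> k"
  shows "bisum2 (\<lambda>u1 u2 v1 v2. (of_nat v1 - 1) * \<phi> u1 * (f u2 * g (u1 - u2))
                             + (of_nat v2 - 1) * \<phi> u2 * (f u2 * g (u1 - u2))) \<in> Fil_WL k 3"
    (is "?R \<in> _")
proof -
  define P where "P = bisum1 (\<lambda>u v. \<phi> u) * bisum2 (\<lambda>u1 u2 v1 v2. f u2 * g (u1 - u2))"
  have "bisum2 (\<lambda>u1 u2 v1 v2. f u2 * g (u1 - u2)) = bisum2 (\<lambda>u1 u2 v1 v2. f v1 * g v2)"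
    by (rule bisum2_conjugate_gaps) simp
  then have "P = bisum1 (\<lambda>u v. \<phi> v) * bisum2 (\<lambda>u1 u2 v1 v2. f v1 * g v2)"
    unfolding P_def by (subst bisum1_conjugate) simp
  then have "P \<in> Fil_WL k 3"
    using bisum1_mult_bisum2_in_Fil[OF \<phi> f g, of k 3] k by (simp add: add.assoc)
  have "bisum2 (\<lambda>u1 u2 v1 v2. \<Sum>k\<in>{1..<v1}. \<phi> u1 * (f u2 * g (u1 - u2)))
      + bisum2 (\<lambda>u1 u2 v1 v2. \<Sum>k\<in>{1..<v2}. \<phi> u2 * (f u2 * g (u1 - u2))) = ?R"
    unfolding bisum2_add[symmetric] by (rule bisum2_cong) (simp add: of_nat_diff)
  then have "P - ?R = bisum3 (\<lambda>u1 u2 u3 v1 v2 v3. \<phi> u1 * (f u3 * g (u2 - u3)))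
      + bisum3 (\<lambda>u1 u2 u3 v1 v2 v3. \<phi> u2 * (f u3 * g (u1 - u3)))
      + bisum3 (\<lambda>u1 u2 u3 v1 v2 v3. \<phi> u3 * (f u2 * g (u1 - u2)))"
    unfolding P_def bisum1_mult_bisum2 by (simp add: algebra_simps)
  also have "\<dots> \<in> Fil_WL k 3"
  proof (intro Fil_WL_add)
    show "bisum3 (\<lambda>u1 u2 u3 v1 v2 v3. \<phi> u1 * (f u3 * g (u2 - u3))) \<in> Fil_WL k 3"
      by (rule bisum3_in_Fil_gaps[where d="e + (d1 + d2)"
            and P="\<lambda>gs. \<phi> (gs ! 0 + gs ! 1 + gs ! 2) * (f (gs ! 0) * g (gs ! 1))"])
         (use k in \<open>auto intro!: mpoly_fun_mult poly_fun_comp_mpoly_fun[OF \<phi>] poly_fun_comp_mpoly_fun[OF f]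
            poly_fun_comp_mpoly_fun[OF g] mpoly_fun_of_nat_add mpoly_fun_var\<close>)
    show "bisum3 (\<lambda>u1 u2 u3 v1 v2 v3. \<phi> u2 * (f u3 * g (u1 - u3))) \<in> Fil_WL k 3"
      by (rule bisum3_in_Fil_gaps[where d="e + (d1 + d2)"
            and P="\<lambda>gs. \<phi> (gs ! 0 + gs ! 1) * (f (gs ! 0) * g (gs ! 1 + gs ! 2))"])
         (use k in \<open>auto intro!: mpoly_fun_mult poly_fun_comp_mpoly_fun[OF \<phi>] poly_fun_comp_mpoly_fun[OF f]
            poly_fun_comp_mpoly_fun[OF g] mpoly_fun_of_nat_add mpoly_fun_var\<close>)
    show "bisum3 (\<lambda>u1 u2 u3 v1 v2 v3. \<phi> u3 * (f u2 * g (u1 - u2))) \<in> Fil_WL k 3"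
      by (rule bisum3_in_Fil_gaps[where d="e + (d1 + d2)"
            and P="\<lambda>gs. \<phi> (gs ! 0) * (f (gs ! 0 + gs ! 1) * g (gs ! 2))"])
         (use k in \<open>auto intro!: mpoly_fun_mult poly_fun_comp_mpoly_fun[OF \<phi>] poly_fun_comp_mpoly_fun[OF f]
            poly_fun_comp_mpoly_fun[OF g] mpoly_fun_of_nat_add mpoly_fun_var\<close>)
  qed
  finally have "P - ?R \<in> Fil_WL k 3" .
  with \<open>P \<in> Fil_WL k 3\<close> have "P - (P - ?R) \<in> Fil_WL k 3"
    by (rule Fil_WL_diff)
  then show ?thesis by simp
qed

text \<open>After conjugation, the factor \<open>u\<^sub>1\<close> of the weight becomes \<open>v\<^sub>1 + v\<^sub>2\<close>, which up to
  lower-order terms is the stuffle correction for the constant \<open>\<phi>\<close>.\<close>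

lemma bisum2_u1_mult_in_Fil:
  assumes f: "f \<in> poly_fun d1" and g: "g \<in> poly_fun d2" and k: "d1 + d2 + 3 \<le> k"
  shows "bisum2 (\<lambda>u1 u2 v1 v2. of_nat u1 * f v1 * g v2) \<in> Fil_WL k 3"
proof -
  have "bisum2 (\<lambda>u1 u2 v1 v2. of_nat u1 * f v1 * g v2)
      = bisum2 (\<lambda>u1 u2 v1 v2. (of_nat v1 + of_nat v2) * (f u2 * g (u1 - u2)))"
    by (subst bisum2_conjugate, rule bisum2_cong) simp
  also have "\<dots> = bisum2 (\<lambda>u1 u2 v1 v2. (of_nat v1 - 1) * 1 * (f u2 * g (u1 - u2))
                                        + (of_nat v2 - 1) * 1 * (f u2 * g (u1 - u2)))
      + fps_const 2 * bisum2 (\<lambda>u1 u2 v1 v2. f u2 * g (u1 - u2))"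
    unfolding bisum2_cmult[symmetric] bisum2_add[symmetric]
    by (rule bisum2_cong) (simp add: algebra_simps)
  also have "\<dots> \<in> Fil_WL k 3"
  proof (rule Fil_WL_add[OF _ Fil_WL_cmult])
    show "bisum2 (\<lambda>u1 u2 v1 v2. (of_nat v1 - 1) * 1 * (f u2 * g (u1 - u2))
                                + (of_nat v2 - 1) * 1 * (f u2 * g (u1 - u2))) \<in> Fil_WL k 3"
      using bisum2_stuffle_correction_in_Fil[OF poly_fun_const[of 1 0] f g] k by simp
    show "bisum2 (\<lambda>u1 u2 v1 v2. f u2 * g (u1 - u2)) \<in> Fil_WL k 3"
      by (rule bisum2_in_Fil_gaps[where d="d1 + d2" and P="\<lambda>gs. f (gs ! 0) * g (gs ! 1)"])
         (use k in \<open>auto intro!: mpoly_fun_mult poly_fun_at_mpoly_fun f g\<close>)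
  qed
  finally show ?thesis .
qed

lemma bisum2_u2_mult_in_Fil_v2_const:
  assumes f: "f \<in> poly_fun d" and k: "d + 3 \<le> k"
  shows "bisum2 (\<lambda>u1 u2 v1 v2. of_nat u2 * f v1) \<in> Fil_WL k 3"
proof -
  obtain F where F: "F \<in> poly_fun (d + 0 + 1)" "\<And>n. 0 < n \<Longrightarrow> (\<Sum>k\<in>{1..<n}. f k * 1) = F n"
    using poly_fun_convolution_pos[OF f poly_fun_const[of 1 0]] by blast
  have "bisum2 (\<lambda>u1 u2 v1 v2. of_nat u2 * f v1)
      = bisum1 (\<lambda>u v. f v) * bisum1 (\<lambda>u v. of_nat u)
        - bisum2 (\<lambda>u1 u2 v1 v2. f v2 * of_nat u1) - bisum1 (\<lambda>u v. \<Sum>k\<in>{1..<v}. f k * of_nat u)"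
    unfolding bisum1_mult_bisum1 by (simp add: mult.commute)
  also have "\<dots> \<in> Fil_WL k 3"
  proof (intro Fil_WL_diff)
    show "bisum1 (\<lambda>u v. f v) * bisum1 (\<lambda>u v. of_nat u) \<in> Fil_WL k 3"
      using bisum1_mult_bisum1_in_Fil[OF f poly_fun_of_nat, of k 3] k
      by (subst (2) bisum1_conjugate) simp
    have "bisum2 (\<lambda>u1 u2 v1 v2. f v2 * of_nat u1) = bisum2 (\<lambda>u1 u2 v1 v2. of_nat u1 * 1 * f v2)"
      by (simp add: mult.commute)
    then show "bisum2 (\<lambda>u1 u2 v1 v2. f v2 * of_nat u1) \<in> Fil_WL k 3"
      using bisum2_u1_mult_in_Fil[OF poly_fun_const[of 1 0] f] k by simp
    have "bisum1 (\<lambda>u v. \<Sum>k\<in>{1..<v}. f k * of_nat u) = bisum1 (\<lambda>u v. of_nat u * F v)"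
      by (rule bisum1_cong) (simp add: F(2)[symmetric] sum_distrib_left mult.commute)
    then show "bisum1 (\<lambda>u v. \<Sum>k\<in>{1..<v}. f k * of_nat u) \<in> Fil_WL k 3"
      using bisum1_u_mult_in_Fil[OF F(1), of k 3] k by simp
  qed
  finally show ?thesis .
qed

text \<open>Here the conjugated weight \<open>v\<^sub>1 (u\<^sub>1 - u\<^sub>2) f(u\<^sub>2) g(u\<^sub>1 - u\<^sub>2)\<close> is, up to lower-order
  terms, the difference of the stuffle corrections for \<open>\<phi>(u) = u\<close> and for \<open>\<phi> = 1\<close> with an extra
  factor \<open>u\<^sub>2\<close>.\<close>

lemma bisum2_u2_mult_in_Fil_v2_factor:
  assumes f: "f \<in> poly_fun d1" and g: "g \<in> poly_fun d2" and k: "d1 + d2 + 4 \<le> k"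
  shows "bisum2 (\<lambda>u1 u2 v1 v2. of_nat u2 * f v1 * (of_nat v2 * g v2)) \<in> Fil_WL k 3"
proof -
  have "bisum2 (\<lambda>u1 u2 v1 v2. of_nat u2 * f v1 * (of_nat v2 * g v2))
      = bisum2 (\<lambda>u1 u2 v1 v2. of_nat v1 * f u2 * (of_nat (u1 - u2) * g (u1 - u2)))"
    by (subst bisum2_conjugate, rule bisum2_cong) simp
  also have "\<dots> = bisum2 (\<lambda>u1 u2 v1 v2. (of_nat v1 - 1) * of_nat u1 * (f u2 * g (u1 - u2))
                                         + (of_nat v2 - 1) * of_nat u2 * (f u2 * g (u1 - u2)))
      - bisum2 (\<lambda>u1 u2 v1 v2. (of_nat v1 - 1) * 1 * ((of_nat u2 * f u2) * g (u1 - u2))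
                              + (of_nat v2 - 1) * 1 * ((of_nat u2 * f u2) * g (u1 - u2)))
      + bisum2 (\<lambda>u1 u2 v1 v2. of_nat (u1 - u2) * f u2 * g (u1 - u2))"
    unfolding bisum2_diff[symmetric] bisum2_add[symmetric]
    by (rule bisum2_cong) (simp add: of_nat_diff algebra_simps)
  also have "\<dots> \<in> Fil_WL k 3"
  proof (rule Fil_WL_add[OF Fil_WL_diff])
    show "bisum2 (\<lambda>u1 u2 v1 v2. (of_nat v1 - 1) * of_nat u1 * (f u2 * g (u1 - u2))
                                + (of_nat v2 - 1) * of_nat u2 * (f u2 * g (u1 - u2))) \<in> Fil_WL k 3"
      using bisum2_stuffle_correction_in_Fil[OF poly_fun_of_nat f g] k by simp
    show "bisum2 (\<lambda>u1 u2 v1 v2. (of_nat v1 - 1) * 1 * ((of_nat u2 * f u2) * g (u1 - u2))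
                              + (of_nat v2 - 1) * 1 * ((of_nat u2 * f u2) * g (u1 - u2))) \<in> Fil_WL k 3"
      using bisum2_stuffle_correction_in_Fil[OF poly_fun_const[of 1 0] poly_fun_mult[OF poly_fun_of_nat f] g] k by simp
    show "bisum2 (\<lambda>u1 u2 v1 v2. of_nat (u1 - u2) * f u2 * g (u1 - u2)) \<in> Fil_WL k 3"
      by (rule bisum2_in_Fil_gaps[where d="1 + d1 + d2" and P="\<lambda>gs. of_nat (gs ! 1) * f (gs ! 0) * g (gs ! 1)"],
          intro mpoly_fun_mult mpoly_fun_var poly_fun_at_mpoly_fun f g)
         (use k in auto)
  qed
  finally show ?thesis .
qed

lemma bisum2_u2_mult_in_Fil:
  assumes f: "f \<in> poly_fun d1" and g: "g \<in> poly_fun d2" and k: "d1 + d2 + 3 \<le> k"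
  shows "bisum2 (\<lambda>u1 u2 v1 v2. of_nat u2 * f v1 * g v2) \<in> Fil_WL k 3"
proof (cases d2)
  case 0
  then obtain c where "\<And>n. g n = c"
    using poly_fun_0_const g by blast
  then have "bisum2 (\<lambda>u1 u2 v1 v2. of_nat u2 * f v1 * g v2)
      = fps_const c * bisum2 (\<lambda>u1 u2 v1 v2. of_nat u2 * f v1)"
    by (simp add: bisum2_cmult[symmetric] mult.commute)
  then show ?thesis
    using bisum2_u2_mult_in_Fil_v2_const[OF f] k 0 by (simp add: Fil_WL_cmult)
next
  case (Suc d)
  then obtain c h where h: "h \<in> poly_fun d" "\<And>n. g n = c + of_nat n * h n"
    using g poly_fun_Suc_decompose by blast
  then have "bisum2 (\<lambda>u1 u2 v1 v2. of_nat u2 * f v1 * g v2)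
      = fps_const c * bisum2 (\<lambda>u1 u2 v1 v2. of_nat u2 * f v1)
        + bisum2 (\<lambda>u1 u2 v1 v2. of_nat u2 * f v1 * (of_nat v2 * h v2))"
    by (simp add: bisum2_cmult[symmetric] bisum2_add[symmetric] algebra_simps)
  then show ?thesis
    using bisum2_u2_mult_in_Fil_v2_const[OF f] bisum2_u2_mult_in_Fil_v2_factor[OF f h(1)] k Suc
    by (simp add: Fil_WL_add Fil_WL_cmult)
qed

lemma bibracket_depth2:
  "bibracket [s1, s2] [r1, r2] = bisum2 (\<lambda>u1 u2 v1 v2.
     of_nat u1 ^ r1 / fact r1 * (of_nat v1 ^ (s1 - 1) / fact (s1 - 1)) *
     (of_nat u2 ^ r2 / fact r2 * (of_nat v2 ^ (s2 - 1) / fact (s2 - 1))))"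
proof -
  have "bibracket ss rs = bisum (length ss) (\<lambda>us vs. \<Prod>j<length ss.
      of_nat (us ! j) ^ (rs ! j) / fact (rs ! j) * (of_nat (vs ! j) ^ (ss ! j - 1) / fact (ss ! j - 1)))"
    for ss rs
    by (simp add: bibracket_def bisum_def split_def)
  then show ?thesis
    by (simp add: bisum_2[unfolded numeral_2_eq_2] numeral_2_eq_2)
qed

theorem proposition5p9:
  fixes s1 s2 :: nat
  assumes "1 \<le> s1" and "1 \<le> s2"
  shows "bibracket [s1, s2] [1, 0] \<in> Fil_WL (s1 + s2 + 1) 3 \<and>
         bibracket [s1, s2] [0, 1] \<in> Fil_WL (s1 + s2 + 1) 3"
proof -
  define f :: "nat \<Rightarrow> nat \<Rightarrow> rat" where "f a n = of_nat n ^ a / fact a" for a n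
  have f: "f a \<in> poly_fun a" for a
    using poly_fun_cmult[OF poly_fun_monomial, of "1 / fact a" a] by (simp add: f_def[abs_def])
  have k: "(s1 - 1) + (s2 - 1) + 3 \<le> s1 + s2 + 1"
    using assms by simp
  have "bibracket [s1, s2] [1, 0] = bisum2 (\<lambda>u1 u2 v1 v2. of_nat u1 * f (s1 - 1) v1 * f (s2 - 1) v2)"
    and "bibracket [s1, s2] [0, 1] = bisum2 (\<lambda>u1 u2 v1 v2. of_nat u2 * f (s1 - 1) v1 * f (s2 - 1) v2)"
    by (simp_all add: bibracket_depth2 f_def mult_ac)
  with bisum2_u1_mult_in_Fil[OF f f k] bisum2_u2_mult_in_Fil[OF f f k] show ?thesis
    by simp
qed

end
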